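(* Let $w$ be a word over $\Omega$ of length $k$. Then $\{ i \in \{1,\dots,k-1\} : b_i = 1\} = \{ i : [i] = s\} \cup (I \setminus \{s\})$.
   Context: A word of length $k$ is written $w = w_k \dots w_1$. For $1\le i\le k$, $b_i = 1$ if $w_j = w_{k-i+j}$ for all $j=1,\dots,i$, else $b_i=0$. $s = \max\{j \in\{1,\dots,k-1\}: b_j = 1\}$, or $0$ if none. For $1 \le i \le k-1$ with $b_i=1$, $[i] = \max\{ j \in \{1,\dots,k-1\} : b_j=1 \text{ and } i = k - t(k-j) \text{ for some integer } 1 \le t \le \lfloor k/(k-j)\rfloor\}$; $I = \{[i] : 1\le i \le k-1,\ b_i=1\}$. *)

theory Defs
  imports Main
begin

text \<open>A word w = w_k ... w_1 of length k over an alphabet is modelled as a map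
  w :: nat => 'a together with its length k; only the letters w 1, ..., w k matter.
  (The alphabet Omega is the type 'a.)\<close>

definition bflag :: "(nat \<Rightarrow> 'a) \<Rightarrow> nat \<Rightarrow> nat \<Rightarrow> bool" where
  "bflag w k i \<longleftrightarrow> (\<forall>j \<in> {1..i}. w j = w (k - i + j))"

definition sval :: "(nat \<Rightarrow> 'a) \<Rightarrow> nat \<Rightarrow> nat" where
  "sval w k = (if \<exists>j \<in> {1..k-1}. bflag w k j
               then Max {j \<in> {1..k-1}. bflag w k j} else 0)"

definition cls :: "(nat \<Rightarrow> 'a) \<Rightarrow> nat \<Rightarrow> nat \<Rightarrow> nat" where
  "cls w k i = Max {j \<in> {1..k-1}. bflag w k j \<and>
      (\<exists>t::nat. 1 \<le> t \<and> t \<le> k div (k - j) \<and> int i = int k - int t * (int k - int j))}"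

definition Iset :: "(nat \<Rightarrow> 'a) \<Rightarrow> nat \<Rightarrow> nat set" where
  "Iset w k = {cls w k i | i. i \<in> {1..k-1} \<and> bflag w k i}"

end

theory Submission
  imports Defs
begin

text \<open>A border of length i is the same thing as a period k - i. The difference of two
  periods q < p with p + q \<le> k is again a period, so the minimal period k - s divides every
  period p with p + (k - s) \<le> k. If [i] = j \<noteq> i then k - i = t (k - j) with t \<ge> 2,
  which leaves room to apply this to p = k - j: then k - i is also a multiple of k - s, so s
  competes in the maximum defining [i], and [i] = s. Hence [i] \<in> {i, s} for every border i, and the
  decomposition follows.\<close>

definition has_period :: "(nat \<Rightarrow> 'a) \<Rightarrow> nat \<Rightarrow> nat \<Rightarrow> bool" where
  "has_period w k p \<longleftrightarrow> (\<forall>x. 1 \<le> x \<longrightarrow> x + p \<le> k \<longrightarrow> w x = w (x + p))"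

definition borders :: "(nat \<Rightarrow> 'a) \<Rightarrow> nat \<Rightarrow> nat set" where
  "borders w k = {i \<in> {1..k-1}. bflag w k i}"

definition cls_candidates :: "(nat \<Rightarrow> 'a) \<Rightarrow> nat \<Rightarrow> nat \<Rightarrow> nat set" where
  "cls_candidates w k i = {j \<in> {1..k-1}. bflag w k j \<and>
      (\<exists>t::nat. 1 \<le> t \<and> t \<le> k div (k - j) \<and> int i = int k - int t * (int k - int j))}"

lemma bflag_iff_has_period: "i \<le> k \<Longrightarrow> bflag w k i \<longleftrightarrow> has_period w k (k - i)"
  unfolding bflag_def has_period_def
  by (auto simp: add.commute)

lemma has_periodD: "has_period w k p \<Longrightarrow> 1 \<le> x \<Longrightarrow> x + p \<le> k \<Longrightarrow> w x = w (x + p)"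
  unfolding has_period_def by blast

lemma has_period_diff:
  assumes p: "has_period w k p" and q: "has_period w k q" and "q < p" "p + q \<le> k"
  shows "has_period w k (p - q)"
  unfolding has_period_def
proof (intro allI impI)
  fix x assume x: "1 \<le> x" "x + (p - q) \<le> k"
  show "w x = w (x + (p - q))"
  proof (cases "x + p \<le> k")
    case True
    have "w x = w (x + p)" using has_periodD[OF p x(1) True] .
    also have "\<dots> = w (x + (p - q))"
      using has_periodD[OF q, of "x + (p - q)"] x True \<open>q < p\<close> by simp
    finally show ?thesis .
  next
    case False
    then have "q < x" using assms by linarith
    have "w x = w (x - q)"
      using has_periodD[OF q, of "x - q"] \<open>q < x\<close> x by simp
    also have "\<dots> = w (x + (p - q))"
      using has_periodD[OF p, of "x - q"] \<open>q < x\<close> x \<open>q < p\<close> by simp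
    finally show ?thesis .
  qed
qed

lemma min_period_dvd:
  assumes p0: "has_period w k p0" "1 \<le> p0"
    and minimal: "\<And>q. has_period w k q \<Longrightarrow> 1 \<le> q \<Longrightarrow> q < k \<Longrightarrow> p0 \<le> q"
  shows "has_period w k p \<Longrightarrow> p + p0 \<le> k \<Longrightarrow> p0 dvd p"
proof (induction p rule: less_induct)
  case (less p)
  consider "p = 0" | "p = p0" | "p0 < p"
    using minimal[OF less.prems(1)] less.prems(2) p0(2) by linarith
  then show ?case
  proof cases
    case 3
    have "has_period w k (p - p0)" using has_period_diff[OF less.prems(1) p0(1) 3 less.prems(2)] .
    then have "p0 dvd (p - p0)" using less.IH[of "p - p0"] less.prems p0(2) 3 by auto
    then show ?thesis using 3 by (metis dvd_diff_nat dvd_refl le_add_diff_inverse2 less_imp_le dvd_add)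
  qed simp_all
qed

lemma finite_borders: "finite (borders w k)"
  unfolding borders_def by simp

lemma sval_eq_Max: "borders w k \<noteq> {} \<Longrightarrow> sval w k = Max (borders w k)"
  unfolding sval_def borders_def by auto

lemma sval_in_borders: "borders w k \<noteq> {} \<Longrightarrow> sval w k \<in> borders w k"
  using sval_eq_Max finite_borders Max_in by metis

lemma le_sval: "i \<in> borders w k \<Longrightarrow> i \<le> sval w k"
  using sval_eq_Max finite_borders Max_ge by (metis empty_iff)

lemma sval_period_minimal:
  assumes "borders w k \<noteq> {}" "has_period w k q" "1 \<le> q" "q < k"
  shows "k - sval w k \<le> q"
proof -
  have "k - q \<in> borders w k"
    using assms bflag_iff_has_period[of "k - q" k w] unfolding borders_def by auto
  then show ?thesis using le_sval[of "k - q" w k] by linarith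
qed

lemma cls_eq_Max: "cls w k i = Max (cls_candidates w k i)"
  unfolding cls_def cls_candidates_def ..

lemma finite_cls_candidates: "finite (cls_candidates w k i)"
  unfolding cls_candidates_def by simp

lemma cls_candidates_subset_borders: "cls_candidates w k i \<subseteq> borders w k"
  unfolding cls_candidates_def borders_def by auto

text \<open>The integer equation of the definition of [i] just says that k - j divides k - i, and
  the bound on t is then automatic.\<close>

lemma cls_candidates_iff:
  assumes "i \<le> k"
  shows "j \<in> cls_candidates w k i \<longleftrightarrow> j \<in> borders w k \<and> (\<exists>t\<ge>1. k - i = t * (k - j))"
proof -
  have eq: "int i = int k - int t * (int k - int j) \<longleftrightarrow> k - i = t * (k - j)"
    if "j < k" for t
  proof -
    have "int i = int k - int t * (int k - int j) \<longleftrightarrow> int (k - i) = int t * int (k - j)"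
      using assms that by (auto simp: of_nat_diff)
    also have "\<dots> \<longleftrightarrow> k - i = t * (k - j)"
      by (simp flip: of_nat_mult)
    finally show ?thesis .
  qed
  have bound: "t \<le> k div (k - j)" if "k - i = t * (k - j)" "j < k" for t
    using that by (simp add: less_eq_div_iff_mult_less_eq)
  show ?thesis
  proof (cases "j < k")
    case True
    have "(\<exists>t. 1 \<le> t \<and> t \<le> k div (k - j) \<and> int i = int k - int t * (int k - int j))
        \<longleftrightarrow> (\<exists>t\<ge>1. k - i = t * (k - j))"
      using eq[OF True] bound[OF _ True] by blast
    then show ?thesis
      unfolding cls_candidates_def borders_def by (simp only: mem_Collect_eq conj_assoc)
  next
    case False
    then show ?thesis unfolding cls_candidates_def borders_def by auto
  qed
qed

lemma cls_in_cls_candidates: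
  assumes "i \<in> borders w k"
  shows "cls w k i \<in> cls_candidates w k i" "i \<le> cls w k i"
proof -
  have "i < k" using assms unfolding borders_def by auto
  then have "i \<in> cls_candidates w k i"
    using assms cls_candidates_iff[of i k] by (metis mult_1 order_refl less_imp_le)
  then show "cls w k i \<in> cls_candidates w k i" "i \<le> cls w k i"
    using finite_cls_candidates Max_in Max_ge unfolding cls_eq_Max by blast+
qed

lemma cls_in_borders: "i \<in> borders w k \<Longrightarrow> cls w k i \<in> borders w k"
  using cls_in_cls_candidates(1) cls_candidates_subset_borders by blast

lemma cls_le_sval: "i \<in> borders w k \<Longrightarrow> cls w k i \<le> sval w k"
  using cls_in_borders le_sval by blast

lemma cls_eq_sval_or_self:
  assumes i: "i \<in> borders w k"
  shows "cls w k i = sval w k \<or> cls w k i = i"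
proof (rule ccontr)
  assume ne: "\<not> (cls w k i = sval w k \<or> cls w k i = i)"
  define j s where "j = cls w k i" and "s = sval w k"
  have "i \<le> j" "j \<le> s" "j \<in> borders w k"
    using cls_in_cls_candidates(2)[OF i] cls_in_borders[OF i] cls_le_sval[OF i]
    unfolding j_def s_def by auto
  with ne have "i < j" "j < s" unfolding j_def s_def by auto
  have s: "s \<in> borders w k" using sval_in_borders i unfolding s_def by blast
  have "i < k" "s < k"
    using i \<open>j \<in> borders w k\<close> s unfolding borders_def by auto
  have "j \<in> cls_candidates w k i"
    using cls_in_cls_candidates(1)[OF i] unfolding j_def .
  then obtain t where t: "1 \<le> t" "k - i = t * (k - j)"
    using cls_candidates_iff[of i k] \<open>i < k\<close> by auto
  have "t \<noteq> 1" using t \<open>i < j\<close> \<open>j \<le> s\<close> \<open>s < k\<close> by auto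
  with t have "2 * (k - j) \<le> t * (k - j)" by (intro mult_le_mono1) simp
  then have room: "(k - j) + (k - s) \<le> k" using t \<open>j < s\<close> \<open>i < k\<close> by linarith
  have per_s: "has_period w k (k - s)" and per_j: "has_period w k (k - j)"
    using s \<open>j \<in> borders w k\<close> bflag_iff_has_period[of s k w] bflag_iff_has_period[of j k w]
    unfolding borders_def by auto
  have "k - s \<le> q" if "has_period w k q" "1 \<le> q" "q < k" for q
    using sval_period_minimal[OF _ that] i unfolding s_def by blast
  then have "(k - s) dvd (k - j)"
    using min_period_dvd[OF per_s _ _ per_j room] \<open>s < k\<close> by simp
  then obtain m where "k - j = (k - s) * m" ..
  with t have km: "k - i = (t * m) * (k - s)" by simp
  then have "1 \<le> t * m" using \<open>i < k\<close> by (cases "t * m") auto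
  with km have "s \<in> cls_candidates w k i"
    using cls_candidates_iff[of i k s w] s \<open>i < k\<close> by auto
  then have "s \<le> j"
    using Max_ge[OF finite_cls_candidates] unfolding j_def cls_eq_Max by blast
  with \<open>j < s\<close> show False by simp
qed

lemma Iset_subset_borders: "Iset w k \<subseteq> borders w k"
  unfolding Iset_def using cls_in_borders unfolding borders_def by blast

theorem corollary4p1:
  fixes w :: "nat \<Rightarrow> 'a" and k :: nat
  shows "{i \<in> {1..k-1}. bflag w k i} =
         {i \<in> {1..k-1}. bflag w k i \<and> cls w k i = sval w k} \<union> (Iset w k - {sval w k})"
proof -
  have "i \<in> Iset w k - {sval w k}"
    if i: "i \<in> borders w k" and ne: "cls w k i \<noteq> sval w k" for i
  proof -
    have "cls w k i = i" using cls_eq_sval_or_self[OF i] ne by simp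
    then have "i \<in> Iset w k" using i unfolding Iset_def borders_def by force
    moreover have "i \<noteq> sval w k"
      using cls_in_cls_candidates(2)[OF i] cls_le_sval[OF i] ne by auto
    ultimately show ?thesis by blast
  qed
  then show ?thesis
    using Iset_subset_borders[of w k] unfolding borders_def by blast
qed

end
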